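(* Let $s$ be a positive integer such that $4\mid s$ or $4\mid (s+1)$, let $k=2s+1$, and let $t$ be an integer. Let $E$ (resp. $O$) be the number of binary vectors $(b_1,\dots,b_s)\in\{0,1\}^s$ with $\sum_{j=1}^{s} j\,b_j\equiv t \pmod{k}$ and $\sum_{j=1}^s b_j$ even (resp. odd), i.e. $E=|\mathrm{SVT}_{t,0}(s,2s+1)|$ and $O=|\mathrm{SVT}_{t,1}(s,2s+1)|$. Then $$E-O=\sigma^{(0)}_{k}(t;s+1)=\frac{1}{k}\sum_{j=0}^{k-1}c_{k}\!\left(t-j^{2}-\frac{s(s+1)}{4}\right).$$ Moreover, if $k$ is a perfect square, then $$E-O=\sigma^{(0)}_{k}(t;s+1)=\frac{1}{\sqrt{k}}\,c_{k}\!\left(t-\frac{s(s+1)}{4}\right).$$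
   Context: For a positive integer $m$, $(q)_m=(1-q)(1-q^2)\cdots(1-q^m)$ and $(q)_0=1$. For integers $k\ge 1$ and $1\le s\le k$, $\sigma^{(0)}_k(t;s)$ for $0\le t\le k-1$ denotes the coefficient of $q^t$ in the remainder of $(q)_{s-1}$ upon division by $1-q^k$ (a polynomial of degree at most $k-1$), and this is extended to all integers $t$ by $k$-periodicity. $c_k(t)=\sum_{1\le h\le k,\ \gcd(h,k)=1}e^{2\pi i h t/k}$ is the Ramanujan sum. The shifted Varshamov–Tenengolts code $\mathrm{SVT}_{t,r}(s,k)$ ($r\in\{0,1\}$) is the set of binary vectors $(b_1,\dots,b_s)$ with $\sum_j j b_j\equiv t \pmod k$ and $\sum_j b_j\equiv r\pmod 2$. *)

theory Defs
  imports Complex_Main "HOL-Computational_Algebra.Polynomial"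
begin

definition qpoch :: "nat \<Rightarrow> rat poly" where
  "qpoch m = (\<Prod>i\<in>{1..m}. 1 - monom 1 i)"

definition sigma0 :: "nat \<Rightarrow> int \<Rightarrow> nat \<Rightarrow> rat" where
  "sigma0 k t s = coeff (qpoch (s - 1) mod (1 - monom 1 k)) (nat (t mod int k))"

definition ramanujan :: "nat \<Rightarrow> int \<Rightarrow> complex" where
  "ramanujan k t = (\<Sum>h\<in>{h\<in>{1..k}. coprime h k}.
      exp (2 * of_real pi * \<i> * of_nat h * of_int t / of_nat k))"

text \<open>Shifted Varshamov-Tenengolts code; a vector (b_1,...,b_s) is a bool list bs
  of length s with b_j = bs ! (j-1).\<close>
definition SVT :: "int \<Rightarrow> nat \<Rightarrow> nat \<Rightarrow> nat \<Rightarrow> bool list set" where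
  "SVT t r s k = {bs. length bs = s \<and>
     (\<Sum>j\<in>{1..s}. int j * (if bs ! (j - 1) then 1 else 0)) mod int k = t mod int k \<and>
     (\<Sum>j\<in>{1..s}. (if bs ! (j - 1) then 1 else 0::nat)) mod 2 = r mod 2}"

end

(* The signed count E - O is the coefficient of q^t in (q)_s reduced modulo 1 - q^k, because
   (q)_s is the sum of (-1)^(b_1 + ... + b_s) q^(b_1 + 2 b_2 + ... + s b_s) over all binary vectors.
   Filtering the residue class of t with the additive characters of Z/k gives, with
   zeta = exp(2 pi i / k), k (E - O) = sum over a < k of zeta^(-a t) prod_{j=1..s} (1 - zeta^(a j)).
   The product vanishes unless a is a unit mod k. For a primitive k-th root of unity w, k = 2s + 1,
   Gauss's evaluation of the alternating sum of Gaussian binomial coefficients at a root of unity,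
   completing the square and a reflection argument on products of sines give
   prod_{j=1..s} (1 - w^j) = w^(s(s+1)/4) sum_{x<k} w^(x^2); summing over the units produces the
   Ramanujan sums. If k = m^2, every quadratic Gauss sum sum_{x<k} zeta^(b x^2) with b a unit
   equals m, which gives the second formula. *)

theory Submission
  imports Defs "HOL-Analysis.Analysis"
begin

section \<open>Gaussian binomial coefficients at roots of unity\<close>

fun qbinomial :: "'a::comm_ring_1 \<Rightarrow> nat \<Rightarrow> nat \<Rightarrow> 'a" where
  "qbinomial q m 0 = 1"
| "qbinomial q 0 (Suc j) = 0"
| "qbinomial q (Suc m) (Suc j) = qbinomial q m j + q ^ Suc j * qbinomial q m (Suc j)"

lemma qbinomial_eq_0: "m < j \<Longrightarrow> qbinomial q m j = 0"
  by (induction q m j rule: qbinomial.induct) auto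

lemma qbinomial_diag [simp]: "qbinomial q m m = 1"
  by (induction m) (auto simp: qbinomial_eq_0)

lemma qbinomial_Suc_Suc':
  "j \<le> m \<Longrightarrow> qbinomial q (Suc m) (Suc j) = q ^ (m - j) * qbinomial q m j + qbinomial q m (Suc j)"
proof (induction m arbitrary: j)
  case 0
  then show ?case by simp
next
  case (Suc m)
  show ?case
  proof (cases j)
    case 0
    then show ?thesis using Suc.IH[of 0] by (simp add: algebra_simps)
  next
    case (Suc i)
    show ?thesis
    proof (cases "i = m")
      case True
      then show ?thesis using Suc by (simp add: qbinomial_eq_0)
    next
      case False
      with Suc.prems \<open>j = Suc i\<close> have "Suc i \<le> m" by simp
      have "Suc (Suc i) + (m - Suc i) = (m - i) + Suc i"
        using \<open>Suc i \<le> m\<close> by simp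
      then have pow: "q ^ Suc (Suc i) * q ^ (m - Suc i) = q ^ (m - i) * q ^ Suc i"
        by (simp only: power_add[symmetric])
      have "qbinomial q (Suc (Suc m)) (Suc j)
          = q ^ (m - i) * qbinomial q m i + qbinomial q m (Suc i)
            + (q ^ Suc (Suc i) * q ^ (m - Suc i)) * qbinomial q m (Suc i)
            + q ^ Suc (Suc i) * qbinomial q m (Suc (Suc i))"
        using Suc.IH[of i] Suc.IH[OF \<open>Suc i \<le> m\<close>] \<open>i \<noteq> m\<close> \<open>j = Suc i\<close> Suc.prems
        by (simp add: algebra_simps)
      also have "\<dots> = q ^ (m - i) * (qbinomial q m i + q ^ Suc i * qbinomial q m (Suc i))
            + (qbinomial q m (Suc i) + q ^ Suc (Suc i) * qbinomial q m (Suc (Suc i)))"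
        unfolding pow by (simp add: algebra_simps)
      finally show ?thesis
        using \<open>j = Suc i\<close> by simp
    qed
  qed
qed

lemma qbinomial_ratio:
  "(1 - q ^ Suc j) * qbinomial q m (Suc j) = (1 - q ^ (m - j)) * qbinomial q m j"
proof (cases "j \<le> m")
  case True
  then show ?thesis
    using qbinomial_Suc_Suc'[OF True, of q] by (simp add: algebra_simps)
next
  case False
  then show ?thesis by (simp add: qbinomial_eq_0)
qed

lemma qbinomial_absorb:
  "(1 - q ^ Suc j) * qbinomial q (Suc m) (Suc j) = (1 - q ^ Suc m) * qbinomial q m j"
proof (cases "j \<le> m")
  case True
  then have "Suc j + (m - j) = Suc m" by simp
  then have pow: "q ^ Suc j * q ^ (m - j) = q ^ Suc m"
    by (simp only: power_add[symmetric])
  have "(1 - q ^ Suc j) * qbinomial q (Suc m) (Suc j)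
      = (1 - q ^ Suc j) * qbinomial q m j + q ^ Suc j * ((1 - q ^ Suc j) * qbinomial q m (Suc j))"
    by (simp add: algebra_simps)
  also have "\<dots> = (1 - q ^ Suc j * q ^ (m - j)) * qbinomial q m j"
    by (simp only: qbinomial_ratio) (simp add: algebra_simps)
  finally show ?thesis
    unfolding pow .
next
  case False
  then show ?thesis by (simp add: qbinomial_eq_0)
qed

lemma alternating_qbinomial_sum_Suc_Suc:
  "(\<Sum>j\<le>Suc (Suc m). (-1) ^ j * qbinomial q (Suc (Suc m)) j)
     = (1 - q ^ Suc m) * (\<Sum>j\<le>m. (-1) ^ j * qbinomial q m j)"
proof -
  define g where "g j = (-1) ^ j * qbinomial q (Suc m) j" for j
  have step: "(-1) ^ Suc j * qbinomial q (Suc (Suc m)) (Suc j)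
      = (g (Suc j) - g j) + (-1) ^ j * ((1 - q ^ Suc m) * qbinomial q m j)" for j
  proof -
    have "q ^ Suc j * qbinomial q (Suc m) (Suc j)
        = qbinomial q (Suc m) (Suc j) - (1 - q ^ Suc m) * qbinomial q m j"
      using qbinomial_absorb[of q j m] by (simp del: qbinomial.simps add: algebra_simps)
    then have rec: "qbinomial q (Suc (Suc m)) (Suc j)
        = qbinomial q (Suc m) (Suc j) + qbinomial q (Suc m) j - (1 - q ^ Suc m) * qbinomial q m j"
      by (simp only: qbinomial.simps(3)) simp
    show ?thesis
      unfolding g_def rec by (simp del: qbinomial.simps add: algebra_simps)
  qed
  have "(\<Sum>j\<le>Suc (Suc m). (-1) ^ j * qbinomial q (Suc (Suc m)) j)
      = 1 + (\<Sum>j\<le>Suc m. (-1) ^ Suc j * qbinomial q (Suc (Suc m)) (Suc j))"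
    by (simp only: sum.atMost_Suc_shift[of _ "Suc m"]) simp
  also have "\<dots> = 1 + (\<Sum>j\<le>Suc m. g (Suc j) - g j)
      + (\<Sum>j\<le>Suc m. (-1) ^ j * ((1 - q ^ Suc m) * qbinomial q m j))"
    by (simp only: step sum.distrib add.assoc)
  also have "(\<Sum>j\<le>Suc m. g (Suc j) - g j) = - (\<Sum>j\<le>Suc m. g j - g (Suc j))"
    by (simp add: sum_negf[symmetric])
  also have "\<dots> = -1"
    using qbinomial_eq_0[of "Suc m" "Suc (Suc m)" q] by (simp only: sum_telescope) (simp add: g_def)
  also have "(\<Sum>j\<le>Suc m. (-1) ^ j * ((1 - q ^ Suc m) * qbinomial q m j))
      = (1 - q ^ Suc m) * (\<Sum>j\<le>m. (-1) ^ j * qbinomial q m j)"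
    by (simp add: sum_distrib_left qbinomial_eq_0 mult_ac)
  finally show ?thesis by simp
qed

lemma alternating_qbinomial_sum_even:
  "(\<Sum>j\<le>2 * s. (-1) ^ j * qbinomial q (2 * s) j) = (\<Prod>i<s. 1 - q ^ (2 * i + 1))"
proof (induction s)
  case 0
  then show ?case by simp
next
  case (Suc s)
  then show ?case
    using alternating_qbinomial_sum_Suc_Suc[of q "2 * s"] by (simp add: mult.commute)
qed

definition primitive_root :: "nat \<Rightarrow> 'a::monoid_mult \<Rightarrow> bool" where
  "primitive_root k w \<longleftrightarrow> (\<forall>n. w ^ n = 1 \<longleftrightarrow> k dvd n)"

lemma primitive_root_power_eq_1_iff: "primitive_root k w \<Longrightarrow> w ^ n = 1 \<longleftrightarrow> k dvd n"
  by (simp add: primitive_root_def)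

lemma primitive_root_power_order: "primitive_root k w \<Longrightarrow> w ^ k = 1"
  by (simp add: primitive_root_def)

lemma primitive_root_power_coprime:
  assumes "primitive_root k w" and "coprime a k"
  shows "primitive_root k (w ^ a)"
  using assms by (simp add: primitive_root_def coprime_commute coprime_dvd_mult_right_iff
      flip: power_mult)

lemma primitive_root_inverse:
  fixes w :: "'a::field"
  shows "primitive_root k w \<Longrightarrow> primitive_root k (inverse w)"
  by (simp add: primitive_root_def power_inverse)

lemma qbinomial_primitive_root:
  fixes q :: "'a::field"
  assumes "primitive_root (Suc m) q" and "j \<le> m"
  shows "qbinomial q m j = (-1) ^ j * inverse q ^ (j * (j + 1) div 2)"
  using \<open>j \<le> m\<close>
proof (induction j)
  case 0
  then show ?case by simp
next
  case (Suc j)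
  have q_Suc_m: "q ^ Suc m = 1"
    using primitive_root_power_eq_1_iff[OF assms(1), of "Suc m"] by simp
  have "\<not> Suc m dvd Suc j"
    using Suc.prems nat_dvd_not_less[of "Suc j" "Suc m"] by simp
  then have q_Suc_j: "q ^ Suc j \<noteq> 1"
    using primitive_root_power_eq_1_iff[OF assms(1), of "Suc j"] by simp
  have "q \<noteq> 0"
    using q_Suc_m by (metis power_0_Suc zero_neq_one)
  then have inverse_Suc_j: "q ^ Suc j * inverse q ^ Suc j = 1"
    by (simp only: power_mult_distrib[symmetric]) simp
  have "m - j + Suc j = Suc m"
    using Suc.prems by simp
  then have "q ^ (m - j) * q ^ Suc j = 1"
    using q_Suc_m by (simp only: power_add[symmetric])
  then have "q ^ (m - j) = inverse q ^ Suc j"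
    by (metis inverse_unique mult.commute power_inverse)
  then have "1 - q ^ (m - j) = (1 - q ^ Suc j) * (- (inverse q ^ Suc j))"
    by (simp only: mult_minus_right left_diff_distrib mult_1_left inverse_Suc_j minus_diff_eq)
  then have cancel: "(1 - q ^ Suc j) * qbinomial q m (Suc j)
      = (1 - q ^ Suc j) * (- (inverse q ^ Suc j) * qbinomial q m j)"
    using qbinomial_ratio[of q j m] by simp
  have "1 - q ^ Suc j \<noteq> 0"
    using q_Suc_j by simp
  then have "qbinomial q m (Suc j) = - (inverse q ^ Suc j) * qbinomial q m j"
    using cancel by (rule mult_left_cancel[THEN iffD1])
  moreover have "Suc j * (Suc j + 1) div 2 = j * (j + 1) div 2 + Suc j"
    by simp
  ultimately show ?case
    using Suc.IH Suc.prems by (simp only: power_add) simp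
qed

lemma sum_triangular_powers_primitive_root:
  fixes q :: "'a::field"
  assumes "primitive_root (2 * s + 1) q"
  shows "(\<Sum>j\<le>2 * s. inverse q ^ (j * (j + 1) div 2)) = (\<Prod>i<s. 1 - q ^ (2 * i + 1))"
proof -
  have "(-1) ^ j * qbinomial q (2 * s) j = inverse q ^ (j * (j + 1) div 2)" if "j \<le> 2 * s" for j
    using qbinomial_primitive_root[of "2 * s" q j] assms that by simp
  then show ?thesis
    using alternating_qbinomial_sum_even[of q s] by simp
qed

section \<open>Quadratic Gauss sums as products of sines\<close>

text \<open>For \<open>z = exp (i * theta)\<close> this is \<open>2 i sin (m * theta)\<close>.\<close>

definition sine_factor :: "'a::field \<Rightarrow> nat \<Rightarrow> 'a" where
  "sine_factor z m = z ^ m - inverse z ^ m"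

lemma sine_factor_reflect:
  assumes "z ^ k = 1" and "m \<le> k"
  shows "sine_factor z (k - m) = - sine_factor z m"
proof (cases "k = 0")
  case True
  then show ?thesis
    using assms(2) by (simp add: sine_factor_def)
next
  case False
  then have "z \<noteq> 0"
    using assms(1) by (auto simp: power_0_left)
  have "k - m + m = k"
    using assms(2) by simp
  then have "z ^ (k - m) * z ^ m = 1"
    using assms(1) by (simp only: power_add[symmetric])
  then have "z ^ (k - m) = inverse z ^ m"
    by (metis inverse_unique mult.commute power_inverse)
  moreover from this have "inverse z ^ (k - m) = z ^ m"
    by (simp add: power_inverse)
  ultimately show ?thesis
    by (simp add: sine_factor_def)
qed

lemma sum_lessThan_shift_periodic:
  fixes f :: "nat \<Rightarrow> 'a::cancel_comm_monoid_add"
  assumes "\<And>x. f (x + k) = f x"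
  shows "(\<Sum>j<k. f (j + c)) = (\<Sum>j<k. f j)"
proof (induction c)
  case 0
  then show ?case by simp
next
  case (Suc c)
  have "(\<Sum>j<k. f (j + Suc c)) + f c = (\<Sum>j<Suc k. f (j + c))"
    by (simp only: sum.lessThan_Suc_shift) (simp add: add.commute)
  also have "\<dots> = (\<Sum>j<k. f (j + c)) + f c"
    using assms[of c] by (simp add: add.commute)
  finally show ?case
    using Suc by simp
qed

lemma prod_parity_class_reflect:
  fixes f :: "nat \<Rightarrow> 'a::comm_ring_1"
  assumes reflect: "\<And>m. 1 \<le> m \<Longrightarrow> m \<le> 2 * s \<Longrightarrow> f (2 * s + 1 - m) = - f m"
    and "p < 2"
  shows "(\<Prod>m | m \<in> {1..2 * s} \<and> m mod 2 = p. f m)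
       = (-1) ^ card {m \<in> {s + 1..2 * s}. m mod 2 = p} * (\<Prod>m\<in>{1..s}. f m)"
proof -
  define low where "low = {m \<in> {1..s}. m mod 2 = p}"
  define high where "high = {m \<in> {s + 1..2 * s}. m mod 2 = p}"
  define low' where "low' = {m \<in> {1..s}. m mod 2 \<noteq> p}"
  have parity_flip: "(2 * s + 1 - m) mod 2 = p \<longleftrightarrow> m mod 2 \<noteq> p" if "m \<le> 2 * s + 1" for m
  proof -
    have "odd ((2 * s + 1 - m) + m)"
      using that by simp
    then show ?thesis
      using \<open>p < 2\<close> by (auto simp: mod2_eq_if split: if_splits)
  qed
  have "(\<Prod>m\<in>high. f (2 * s + 1 - m)) = (\<Prod>m\<in>low'. f m)"
    by (rule prod.reindex_bij_witness[where i = "\<lambda>m. 2 * s + 1 - m" and j = "\<lambda>m. 2 * s + 1 - m"])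
      (auto simp: high_def low'_def parity_flip[symmetric])
  moreover have "(\<Prod>m\<in>high. f m) = (-1) ^ card high * (\<Prod>m\<in>high. f (2 * s + 1 - m))"
    using reflect by (simp add: high_def flip: prod_uminus)
  ultimately have high: "(\<Prod>m\<in>high. f m) = (-1) ^ card high * (\<Prod>m\<in>low'. f m)"
    by simp
  have "{m \<in> {1..2 * s}. m mod 2 = p} = low \<union> high"
    by (auto simp: low_def high_def)
  then have "(\<Prod>m | m \<in> {1..2 * s} \<and> m mod 2 = p. f m) = (\<Prod>m\<in>low \<union> high. f m)"
    by simp
  also have "\<dots> = (\<Prod>m\<in>low. f m) * (\<Prod>m\<in>high. f m)"
    by (rule prod.union_disjoint) (auto simp: low_def high_def)
  also have "\<dots> = (-1) ^ card high * ((\<Prod>m\<in>low. f m) * (\<Prod>m\<in>low'. f m))"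
    by (simp add: high ac_simps)
  also have "(\<Prod>m\<in>low. f m) * (\<Prod>m\<in>low'. f m) = (\<Prod>m\<in>low \<union> low'. f m)"
    by (rule prod.union_disjoint[symmetric]) (auto simp: low_def low'_def)
  also have "low \<union> low' = {1..s}"
    by (auto simp: low_def low'_def)
  finally show ?thesis
    by (simp add: high_def)
qed

lemma card_parity_classes:
  "card {m \<in> {s + 1..2 * s}. m mod 2 = 1} + card {m \<in> {s + 1..2 * s}. m mod 2 = 0} = s"
proof -
  have "{m \<in> {s + 1..2 * s}. m mod 2 = 1} \<union> {m \<in> {s + 1..2 * s}. m mod 2 = 0} = {s + 1..2 * s}"
    by auto
  moreover have "card ({m \<in> {s + 1..2 * s}. m mod 2 = 1} \<union> {m \<in> {s + 1..2 * s}. m mod 2 = 0})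
      = card {m \<in> {s + 1..2 * s}. m mod 2 = 1} + card {m \<in> {s + 1..2 * s}. m mod 2 = 0}"
    by (rule card_Un_disjoint) auto
  ultimately show ?thesis
    by simp
qed

lemma prod_odd_reflect:
  fixes f :: "nat \<Rightarrow> 'a::comm_ring_1"
  assumes "\<And>m. 1 \<le> m \<Longrightarrow> m \<le> 2 * s \<Longrightarrow> f (2 * s + 1 - m) = - f m"
  shows "(\<Prod>i<s. f (2 * i + 1))
       = (-1) ^ card {m \<in> {s + 1..2 * s}. m mod 2 = 1} * (\<Prod>m\<in>{1..s}. f m)"
proof -
  have "(\<Prod>i<s. f (2 * i + 1)) = (\<Prod>m | m \<in> {1..2 * s} \<and> m mod 2 = 1. f m)"
    by (rule prod.reindex_bij_witness[where i = "\<lambda>m. m div 2" and j = "\<lambda>i. 2 * i + 1"])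
      (auto, presburger+)
  also have "\<dots> = (-1) ^ card {m \<in> {s + 1..2 * s}. m mod 2 = 1} * (\<Prod>m\<in>{1..s}. f m)"
    using assms by (rule prod_parity_class_reflect) simp_all
  finally show ?thesis .
qed

lemma prod_even_reflect:
  fixes f :: "nat \<Rightarrow> 'a::comm_ring_1"
  assumes "\<And>m. 1 \<le> m \<Longrightarrow> m \<le> 2 * s \<Longrightarrow> f (2 * s + 1 - m) = - f m"
  shows "(\<Prod>j\<in>{1..s}. f (2 * j))
       = (-1) ^ card {m \<in> {s + 1..2 * s}. m mod 2 = 0} * (\<Prod>m\<in>{1..s}. f m)"
proof -
  have "(\<Prod>j\<in>{1..s}. f (2 * j)) = (\<Prod>m | m \<in> {1..2 * s} \<and> m mod 2 = 0. f m)"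
    by (rule prod.reindex_bij_witness[where i = "\<lambda>m. m div 2" and j = "\<lambda>j. 2 * j"]) auto
  also have "\<dots> = (-1) ^ card {m \<in> {s + 1..2 * s}. m mod 2 = 0} * (\<Prod>m\<in>{1..s}. f m)"
    using assms by (rule prod_parity_class_reflect) simp_all
  finally show ?thesis .
qed

lemma sum_odd_numbers: "(\<Sum>i<s. 2 * i + 1) = (s::nat) ^ 2"
  by (induction s) (auto simp: power2_eq_square)

lemma sum_square_powers_complete_square:
  fixes w :: "'a::comm_ring_1"
  assumes "w ^ (2 * s + 1) = 1"
  shows "(\<Sum>x<2 * s + 1. w ^ x\<^sup>2) = w ^ s\<^sup>2 * (\<Sum>j<2 * s + 1. w ^ (j * (j + 1)))"
proof -
  define k where "k = 2 * s + 1"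
  have w_k: "w ^ k = 1"
    using assms by (simp add: k_def)
  have "w ^ (x + k)\<^sup>2 = w ^ x\<^sup>2" for x
  proof -
    have "(x + k)\<^sup>2 = x\<^sup>2 + k * (2 * x + k)"
      by (simp add: power2_eq_square algebra_simps)
    then show ?thesis
      by (simp only: power_add power_mult w_k power_one mult_1_right)
  qed
  then have "(\<Sum>x<k. w ^ x\<^sup>2) = (\<Sum>j<k. w ^ (j + (s + 1))\<^sup>2)"
    using sum_lessThan_shift_periodic[of "\<lambda>x. w ^ x\<^sup>2" k "s + 1"] by simp
  also have "\<dots> = (\<Sum>j<k. w ^ s\<^sup>2 * w ^ (j * (j + 1)))"
  proof (rule sum.cong[OF refl])
    fix j
    have "(j + (s + 1))\<^sup>2 = s\<^sup>2 + j * (j + 1) + k * (j + 1)"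
      by (simp add: k_def power2_eq_square algebra_simps)
    then show "w ^ (j + (s + 1))\<^sup>2 = w ^ s\<^sup>2 * w ^ (j * (j + 1))"
      by (simp only: power_add power_mult w_k power_one mult_1_right)
  qed
  finally show ?thesis
    unfolding k_def by (simp only: sum_distrib_left)
qed

lemma sum_pronic_powers_primitive_root:
  fixes w :: "'a::field"
  assumes "primitive_root (2 * s + 1) w"
  shows "(\<Sum>j<2 * s + 1. w ^ (j * (j + 1))) = (\<Prod>i<s. 1 - inverse w ^ (2 * (2 * i + 1)))"
proof -
  have "coprime 2 (2 * s + 1)"
    by simp
  then have q: "primitive_root (2 * s + 1) (inverse (w ^ 2))"
    using assms by (intro primitive_root_inverse primitive_root_power_coprime)
  have "(\<Sum>j<2 * s + 1. w ^ (j * (j + 1)))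
      = (\<Sum>j\<le>2 * s. inverse (inverse (w ^ 2)) ^ (j * (j + 1) div 2))"
    by (rule sum.cong) (auto simp: lessThan_Suc_atMost power_mult[symmetric])
  also have "\<dots> = (\<Prod>i<s. 1 - inverse (w ^ 2) ^ (2 * i + 1))"
    by (rule sum_triangular_powers_primitive_root[OF q])
  also have "\<dots> = (\<Prod>i<s. 1 - inverse w ^ (2 * (2 * i + 1)))"
    by (simp only: power_inverse power_mult)
  finally show ?thesis .
qed

lemma half_power_root_of_unity:
  fixes w :: "'a::comm_monoid_mult"
  assumes "w ^ (2 * s + 1) = 1"
  shows "(w ^ (s + 1)) ^ 2 = w" and "(w ^ (s + 1)) ^ (2 * s + 1) = 1"
proof -
  have "(s + 1) * 2 = (2 * s + 1) + 1"
    by simp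
  then have "(w ^ (s + 1)) ^ 2 = w ^ ((2 * s + 1) + 1)"
    by (simp only: power_mult[symmetric])
  then show "(w ^ (s + 1)) ^ 2 = w"
    using assms by simp
  have "(w ^ (s + 1)) ^ (2 * s + 1) = (w ^ (2 * s + 1)) ^ (s + 1)"
    by (simp only: power_mult[symmetric] mult.commute)
  then show "(w ^ (s + 1)) ^ (2 * s + 1) = 1"
    using assms by simp
qed

lemma gauss_sum_eq_prod_sine_odd:
  fixes w :: "'a::field"
  assumes "primitive_root (2 * s + 1) w"
  shows "(\<Sum>x<2 * s + 1. w ^ x\<^sup>2) = (\<Prod>i<s. sine_factor w (2 * i + 1))"
proof -
  have w_k: "w ^ (2 * s + 1) = 1"
    by (rule primitive_root_power_order[OF assms])
  then have "w \<noteq> 0"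
    by (auto simp: power_0_left)
  have "(\<Sum>x<2 * s + 1. w ^ x\<^sup>2) = w ^ s\<^sup>2 * (\<Sum>j<2 * s + 1. w ^ (j * (j + 1)))"
    by (rule sum_square_powers_complete_square[OF w_k])
  also have "\<dots> = (\<Prod>i<s. w ^ (2 * i + 1)) * (\<Prod>i<s. 1 - inverse w ^ (2 * (2 * i + 1)))"
    by (simp only: sum_pronic_powers_primitive_root[OF assms] sum_odd_numbers[symmetric] power_sum)
  also have "\<dots> = (\<Prod>i<s. sine_factor w (2 * i + 1))"
  proof (subst prod.distrib[symmetric], rule prod.cong[OF refl])
    fix i
    have "w ^ n * inverse w ^ n = 1" for n
      using \<open>w \<noteq> 0\<close> by (simp only: power_mult_distrib[symmetric]) simp
    then have "w ^ n * inverse w ^ (2 * n) = inverse w ^ n" for n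
      by (simp only: mult_2 power_add mult.assoc[symmetric] mult_1_left)
    then show "w ^ (2 * i + 1) * (1 - inverse w ^ (2 * (2 * i + 1))) = sine_factor w (2 * i + 1)"
      by (simp only: sine_factor_def right_diff_distrib mult_1_right)
  qed
  finally show ?thesis .
qed

lemma gauss_sum_eq_prod_sine:
  fixes w :: "'a::field"
  assumes "primitive_root (2 * s + 1) w"
  shows "(\<Sum>x<2 * s + 1. w ^ x\<^sup>2) = (-1) ^ s * (\<Prod>j\<in>{1..s}. sine_factor (w ^ (s + 1)) j)"
proof -
  define e where "e = w ^ (s + 1)"
  have w_k: "w ^ (2 * s + 1) = 1"
    by (rule primitive_root_power_order[OF assms])
  then have e_square: "e ^ 2 = w" and e_k: "e ^ (2 * s + 1) = 1"
    unfolding e_def by (rule half_power_root_of_unity)+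
  have reflect: "sine_factor z (2 * s + 1 - m) = - sine_factor z m"
    if "z ^ (2 * s + 1) = 1" "m \<le> 2 * s" for z :: 'a and m
    using sine_factor_reflect[OF that(1), of m] that(2) by simp
  have "(\<Sum>x<2 * s + 1. w ^ x\<^sup>2) = (\<Prod>i<s. sine_factor w (2 * i + 1))"
    by (rule gauss_sum_eq_prod_sine_odd[OF assms])
  also have "\<dots> = (-1) ^ card {m \<in> {s + 1..2 * s}. m mod 2 = 1} * (\<Prod>j\<in>{1..s}. sine_factor w j)"
    by (rule prod_odd_reflect, rule reflect[OF w_k])
  also have "(\<Prod>j\<in>{1..s}. sine_factor w j) = (\<Prod>j\<in>{1..s}. sine_factor e (2 * j))"
    by (simp only: sine_factor_def power_inverse power_mult e_square)
  also have "\<dots> = (-1) ^ card {m \<in> {s + 1..2 * s}. m mod 2 = 0} * (\<Prod>j\<in>{1..s}. sine_factor e j)"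
    by (rule prod_even_reflect, rule reflect[OF e_k])
  finally show ?thesis
    by (simp only: mult.assoc[symmetric] power_add[symmetric] card_parity_classes e_def)
qed

lemma prod_one_minus_powers_primitive_root:
  fixes w :: "'a::field"
  assumes "primitive_root (2 * s + 1) w"
  shows "(\<Prod>j\<in>{1..s}. 1 - w ^ j) = w ^ ((s + 1) * (s * (s + 1) div 2)) * (\<Sum>x<2 * s + 1. w ^ x\<^sup>2)"
proof -
  define e where "e = w ^ (s + 1)"
  have w_k: "w ^ (2 * s + 1) = 1"
    by (rule primitive_root_power_order[OF assms])
  then have e_square: "e ^ 2 = w" and "e ^ (2 * s + 1) = 1"
    unfolding e_def by (rule half_power_root_of_unity)+
  then have "e \<noteq> 0"
    by (auto simp: power_0_left)
  have triangular_sum: "(\<Sum>j\<in>{1..s}. j) = s * (s + 1) div 2"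
    using gauss_sum_from_Suc_0[of s, where 'a = nat] by simp
  have "1 - w ^ j = - (e ^ j * sine_factor e j)" for j
  proof -
    have "e ^ j * e ^ j = w ^ j"
      by (simp only: e_square[symmetric] power2_eq_square power_mult_distrib)
    moreover have "e ^ j * inverse e ^ j = 1"
      using \<open>e \<noteq> 0\<close> by (simp only: power_mult_distrib[symmetric]) simp
    ultimately show ?thesis
      by (simp add: sine_factor_def right_diff_distrib)
  qed
  then have "(\<Prod>j\<in>{1..s}. 1 - w ^ j) = (-1) ^ s * ((\<Prod>j\<in>{1..s}. e ^ j) * (\<Prod>j\<in>{1..s}. sine_factor e j))"
    by (simp only: prod_uminus prod.distrib card_atLeastAtMost) simp
  also have "(\<Prod>j\<in>{1..s}. e ^ j) = w ^ ((s + 1) * (s * (s + 1) div 2))"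
    by (simp only: power_sum[symmetric] triangular_sum e_def power_mult)
  also have "(-1) ^ s * (w ^ ((s + 1) * (s * (s + 1) div 2)) * (\<Prod>j\<in>{1..s}. sine_factor e j))
      = w ^ ((s + 1) * (s * (s + 1) div 2)) * ((-1) ^ s * (\<Prod>j\<in>{1..s}. sine_factor e j))"
    by (simp only: mult_ac)
  also have "(-1) ^ s * (\<Prod>j\<in>{1..s}. sine_factor e j) = (\<Sum>x<2 * s + 1. w ^ x\<^sup>2)"
    using gauss_sum_eq_prod_sine[OF assms] by (simp add: e_def flip: mult.assoc power_add)
  finally show ?thesis .
qed

section \<open>Additive characters and Ramanujan sums\<close>

definition unit_root :: "nat \<Rightarrow> int \<Rightarrow> complex" where
  "unit_root n x = exp (2 * of_real pi * \<i> * of_int x / of_nat n)"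

lemma unit_root_add: "unit_root n (x + y) = unit_root n x * unit_root n y"
  unfolding unit_root_def by (simp add: exp_add[symmetric] add_divide_distrib algebra_simps)

lemma unit_root_of_nat_mult: "unit_root n (int a * x) = unit_root n x ^ a"
  unfolding unit_root_def by (simp add: exp_of_nat_mult[symmetric] mult_ac)

lemma unit_root_eq_1_iff:
  assumes "0 < n"
  shows "unit_root n x = 1 \<longleftrightarrow> int n dvd x"
proof -
  have "unit_root n x = exp (\<i> * complex_of_real (2 * pi * x / n))"
    by (simp add: unit_root_def mult_ac)
  also have "\<dots> = 1 \<longleftrightarrow> (\<exists>m::int. 2 * pi * x / n = of_int (2 * m) * pi)"
    by (simp add: exp_eq_1)
  also have "\<dots> \<longleftrightarrow> (\<exists>m::int. x = n * m)"
  proof -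
    have "2 * pi * x / n = of_int (2 * m) * pi \<longleftrightarrow> x = n * m" for m :: int
    proof -
      have "2 * pi * x / n = of_int (2 * m) * pi \<longleftrightarrow> real_of_int x = real n * of_int m"
        using assms by (simp add: field_simps)
      also have "\<dots> \<longleftrightarrow> x = n * m"
        by (metis of_int_eq_iff of_int_mult of_int_of_nat_eq)
      finally show ?thesis .
    qed
    then show ?thesis
      by simp
  qed
  finally show ?thesis
    by (auto simp: dvd_def)
qed

lemma unit_root_0 [simp]: "unit_root n 0 = 1"
  by (simp add: unit_root_def)

lemma unit_root_multiple [simp]: "unit_root n (int n * y) = 1"
proof (cases "n = 0")
  case True
  then show ?thesis by (simp add: unit_root_def)
next
  case False
  then show ?thesis by (simp add: unit_root_eq_1_iff)
qed

lemma unit_root_square_modulus: "unit_root (m * m) (int m * x) = unit_root m x"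
  by (cases "m = 0") (simp_all add: unit_root_def field_simps)

lemma primitive_root_unit_root:
  assumes "0 < n" and "coprime a n"
  shows "primitive_root n (unit_root n (int a))"
  unfolding primitive_root_def
proof
  fix m
  have "unit_root n (int a) ^ m = 1 \<longleftrightarrow> int n dvd int m * int a"
    by (simp only: unit_root_of_nat_mult[symmetric] unit_root_eq_1_iff[OF assms(1)])
  also have "\<dots> \<longleftrightarrow> n dvd m"
    using assms(2) by (simp flip: of_nat_mult add: coprime_commute coprime_dvd_mult_left_iff)
  finally show "unit_root n (int a) ^ m = 1 \<longleftrightarrow> n dvd m" .
qed

lemma sum_unit_root:
  assumes "0 < n"
  shows "(\<Sum>a<n. unit_root n (int a * x)) = (if int n dvd x then of_nat n else 0)"
proof (cases "int n dvd x")
  case True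
  then have "unit_root n x = 1"
    using unit_root_eq_1_iff[OF assms] by simp
  then show ?thesis
    using True by (simp add: unit_root_of_nat_mult)
next
  case False
  then have "unit_root n x \<noteq> 1"
    using unit_root_eq_1_iff[OF assms] by simp
  moreover have "unit_root n x ^ n = 1"
    using unit_root_multiple[of n x] by (simp only: unit_root_of_nat_mult)
  ultimately show ?thesis
    using False by (simp add: unit_root_of_nat_mult geometric_sum)
qed

lemma ramanujan_eq_sum_unit_root:
  "ramanujan k x = (\<Sum>h | h \<in> {1..k} \<and> coprime h k. unit_root k (int h * x))"
  unfolding ramanujan_def unit_root_def by (simp add: mult.assoc)

lemma ramanujan_eq_sum_conj:
  "ramanujan k x = (\<Sum>a | a < k \<and> coprime a k. unit_root k (- (int a * x)))"
  unfolding ramanujan_eq_sum_unit_root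
proof (rule sum.reindex_bij_witness[where i = "\<lambda>a. k - a" and j = "\<lambda>h. k - h"])
  fix h
  assume "h \<in> {h. h \<in> {1..k} \<and> coprime h k}"
  then have "- (int (k - h) * x) = int k * (- x) + int h * x"
    by (auto simp: of_nat_diff algebra_simps)
  then show "unit_root k (- (int (k - h) * x)) = unit_root k (int h * x)"
    by (simp only: unit_root_add unit_root_multiple mult_1_left)
qed (auto simp: coprime_iff_gcd_eq_1 gcd_diff2_nat)

section \<open>Signed counts of binary vectors\<close>

definition vt_moment :: "bool list \<Rightarrow> nat" where
  "vt_moment bs = (\<Sum>j\<in>{1..length bs}. j * of_bool (bs ! (j - 1)))"

definition hamming_weight :: "bool list \<Rightarrow> nat" where
  "hamming_weight bs = (\<Sum>j\<in>{1..length bs}. of_bool (bs ! (j - 1)))"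

lemma vt_moment_snoc: "vt_moment (bs @ [b]) = vt_moment bs + of_bool b * Suc (length bs)"
proof -
  have "(\<Sum>j\<in>{1..length bs}. j * of_bool ((bs @ [b]) ! (j - 1))) = vt_moment bs"
    unfolding vt_moment_def by (rule sum.cong) (auto simp: nth_append)
  then show ?thesis
    by (simp add: vt_moment_def)
qed

lemma hamming_weight_snoc: "hamming_weight (bs @ [b]) = hamming_weight bs + of_bool b"
proof -
  have "(\<Sum>j\<in>{1..length bs}. of_bool ((bs @ [b]) ! (j - 1))) = hamming_weight bs"
    unfolding hamming_weight_def by (rule sum.cong) (auto simp: nth_append)
  then show ?thesis
    by (simp add: hamming_weight_def)
qed

lemma finite_bool_lists_length: "finite {bs :: bool list. length bs = s}"
  using finite_lists_length_eq[of "UNIV :: bool set" s] by simp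

lemma lists_length_Suc_eq_snoc:
  "{bs. length bs = Suc s} = (\<lambda>(bs, b). bs @ [b]) ` ({bs. length bs = s} \<times> UNIV)"
proof
  show "{bs. length bs = Suc s} \<subseteq> (\<lambda>(bs, b). bs @ [b]) ` ({bs. length bs = s} \<times> UNIV)"
  proof
    fix xs
    assume "xs \<in> {bs. length bs = Suc s}"
    then have "xs = butlast xs @ [last xs]" and "length (butlast xs) = s"
      by (auto intro: append_butlast_last_id[symmetric])
    then show "xs \<in> (\<lambda>(bs, b). bs @ [b]) ` ({bs. length bs = s} \<times> UNIV)"
      by (metis (mono_tags, lifting) SigmaI UNIV_I case_prod_conv image_eqI mem_Collect_eq)
  qed
qed auto

lemma sum_signed_powers_vt_moment:
  fixes x :: "'a::comm_ring_1"
  shows "(\<Sum>bs | length bs = s. (-1) ^ hamming_weight bs * x ^ vt_moment bs) = (\<Prod>j\<in>{1..s}. 1 - x ^ j)"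
proof (induction s)
  case 0
  then show ?case
    by (simp add: vt_moment_def hamming_weight_def)
next
  case (Suc s)
  have "inj_on (\<lambda>(bs, b). bs @ [b]) ({bs :: bool list. length bs = s} \<times> UNIV)"
    by (auto simp: inj_on_def)
  then have "(\<Sum>bs | length bs = Suc s. (-1) ^ hamming_weight bs * x ^ vt_moment bs)
      = (\<Sum>bs | length bs = s. \<Sum>b\<in>UNIV. (-1) ^ hamming_weight (bs @ [b]) * x ^ vt_moment (bs @ [b]))"
    by (simp add: lists_length_Suc_eq_snoc sum.reindex sum.cartesian_product split_def)
  also have "\<dots> = (\<Sum>bs | length bs = s. (-1) ^ hamming_weight bs * x ^ vt_moment bs * (1 - x ^ Suc s))"
    by (rule sum.cong) (auto simp: UNIV_bool vt_moment_snoc hamming_weight_snoc power_add algebra_simps)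
  also have "\<dots> = (\<Sum>bs | length bs = s. (-1) ^ hamming_weight bs * x ^ vt_moment bs) * (1 - x ^ Suc s)"
    by (simp only: sum_distrib_right)
  finally show ?case
    by (simp add: Suc.IH prod.nat_ivl_Suc')
qed

definition signed_count :: "nat \<Rightarrow> nat \<Rightarrow> int \<Rightarrow> int" where
  "signed_count s k t =
     (\<Sum>bs | length bs = s \<and> int (vt_moment bs) mod int k = t mod int k. (-1) ^ hamming_weight bs)"

lemma signed_count_conv_sum_if:
  "signed_count s k t = (\<Sum>bs | length bs = s.
      if int (vt_moment bs) mod int k = t mod int k then (-1) ^ hamming_weight bs else 0)"
proof -
  have "{bs. length bs = s \<and> int (vt_moment bs) mod int k = t mod int k}
      = {bs \<in> {bs. length bs = s}. int (vt_moment bs) mod int k = t mod int k}"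
    by auto
  then show ?thesis
    by (simp only: signed_count_def sum.inter_filter[OF finite_bool_lists_length])
qed

lemma SVT_eq:
  "SVT t r s k = {bs. length bs = s \<and> int (vt_moment bs) mod int k = t mod int k
                      \<and> hamming_weight bs mod 2 = r mod 2}"
proof -
  have "(\<Sum>j\<in>{1..length bs}. int j * (if bs ! (j - 1) then 1 else 0)) = int (vt_moment bs)" for bs
    unfolding vt_moment_def of_nat_sum by (rule sum.cong) auto
  moreover have "(\<Sum>j\<in>{1..length bs}. (if bs ! (j - 1) then 1 else 0)) = hamming_weight bs" for bs
    unfolding hamming_weight_def by (rule sum.cong) auto
  ultimately show ?thesis
    unfolding SVT_def by auto
qed

lemma card_SVT_diff: "int (card (SVT t 0 s k)) - int (card (SVT t 1 s k)) = signed_count s k t"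
proof -
  define A where "A = {bs. length bs = s \<and> int (vt_moment bs) mod int k = t mod int k}"
  have "finite A"
    unfolding A_def by (rule finite_subset[OF _ finite_bool_lists_length[of s]]) auto
  have "signed_count s k t = (\<Sum>bs\<in>A. (-1) ^ hamming_weight bs)"
    unfolding signed_count_def A_def ..
  also have "\<dots> = (\<Sum>bs\<in>{bs \<in> A. even (hamming_weight bs)} \<union> {bs \<in> A. odd (hamming_weight bs)}.
      (-1) ^ hamming_weight bs)"
    by (rule sum.cong) auto
  also have "\<dots> = (\<Sum>bs | bs \<in> A \<and> even (hamming_weight bs). 1) + (\<Sum>bs | bs \<in> A \<and> odd (hamming_weight bs). - 1)"
    using \<open>finite A\<close> by (subst sum.union_disjoint) auto
  also have "\<dots> = int (card (SVT t 0 s k)) - int (card (SVT t 1 s k))"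
    by (simp add: SVT_eq A_def even_iff_mod_2_eq_zero odd_iff_mod_2_eq_one)
  finally show ?thesis ..
qed

lemma mod_one_minus_monom_sum:
  fixes c :: "'b \<Rightarrow> 'a::field"
  assumes "finite A" and "0 < k"
  shows "(\<Sum>a\<in>A. monom (c a) (n a)) mod (1 - monom 1 k) = (\<Sum>a\<in>A. monom (c a) (n a mod k))"
proof -
  have "(1 - monom 1 k) dvd (monom (c a) (n a) - monom (c a) (n a mod k))" for a
  proof -
    have "monom (c a) (n a) - monom (c a) (n a mod k) = monom (c a) (n a mod k) * (monom 1 k ^ (n a div k) - 1)"
      by (simp add: monom_power mult_monom right_diff_distrib add.commute)
    moreover have "(monom 1 k - 1) dvd (monom (1::'a) k ^ (n a div k) - 1)"
      by (simp add: power_diff_1_eq)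
    ultimately show ?thesis
      by (metis dvd_mult minus_diff_eq minus_dvd_iff)
  qed
  then have "(1 - monom 1 k) dvd ((\<Sum>a\<in>A. monom (c a) (n a)) - (\<Sum>a\<in>A. monom (c a) (n a mod k)))"
    by (simp add: sum_subtractf[symmetric] dvd_sum)
  moreover have "degree (\<Sum>a\<in>A. monom (c a) (n a mod k)) < degree (1 - monom (1::'a) k)"
  proof -
    have "degree (monom (1::'a) k + (-1)) = degree (monom (1::'a) k)"
      by (rule degree_add_eq_left) (simp add: degree_monom_eq assms(2))
    moreover have "1 - monom (1::'a) k = - (monom 1 k + (-1))"
      by simp
    ultimately have "degree (1 - monom (1::'a) k) = k"
      by (metis degree_minus degree_monom_eq one_neq_zero)
    moreover have "degree (monom (c a) (n a mod k)) \<le> k - 1" for a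
    proof -
      have "n a mod k \<le> k - 1"
        using mod_less_divisor[OF assms(2), of "n a"] by linarith
      then show ?thesis
        by (meson degree_monom_le le_trans)
    qed
    then have "degree (\<Sum>a\<in>A. monom (c a) (n a mod k)) \<le> k - 1"
      by (intro degree_sum_le[OF assms(1)])
    ultimately show ?thesis
      using assms(2) by simp
  qed
  ultimately show ?thesis
    by (metis mod_eq_dvd_iff mod_poly_less)
qed

lemma sigma0_eq_signed_count:
  assumes "0 < k"
  shows "sigma0 k t (s + 1) = of_int (signed_count s k t)"
proof -
  have sign_monom: "(-1) ^ w * monom 1 m = monom ((-1) ^ w :: rat) m" for w m
    by (induction w) (simp_all add: minus_monom)
  have "qpoch s = (\<Sum>bs | length bs = s. monom ((-1) ^ hamming_weight bs) (vt_moment bs))"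
    using sum_signed_powers_vt_moment[of "monom (1::rat) 1" s]
    by (simp add: qpoch_def monom_power sign_monom)
  then have "sigma0 k t (s + 1)
      = coeff (\<Sum>bs | length bs = s. monom ((-1) ^ hamming_weight bs) (vt_moment bs mod k)) (nat (t mod int k))"
    by (simp add: sigma0_def mod_one_minus_monom_sum[OF finite_bool_lists_length assms])
  also have "\<dots> = (\<Sum>bs | length bs = s. if int (vt_moment bs) mod int k = t mod int k
                                          then (-1) ^ hamming_weight bs else 0)"
  proof -
    have "vt_moment bs mod k = nat (t mod int k) \<longleftrightarrow> int (vt_moment bs) mod int k = t mod int k" for bs
      using assms by (auto simp flip: zmod_int)
    then show ?thesis
      by (simp add: coeff_sum coeff_monom)
  qed
  also have "\<dots> = of_int (signed_count s k t)"
    by (simp add: signed_count_conv_sum_if of_int_sum if_distrib cong: if_cong)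
  finally show ?thesis .
qed

lemma signed_count_fourier:
  assumes "0 < k"
  shows "of_nat k * of_int (signed_count s k t)
       = (\<Sum>a<k. unit_root k (- (int a * t)) * (\<Prod>j\<in>{1..s}. 1 - unit_root k (int a) ^ j))"
proof -
  have "unit_root k (- (int a * t)) * ((-1) ^ hamming_weight bs * unit_root k (int a) ^ vt_moment bs)
      = (-1) ^ hamming_weight bs * unit_root k (int a * (int (vt_moment bs) - t))" for a bs
  proof -
    have "unit_root k (- (int a * t)) * unit_root k (int a) ^ vt_moment bs
        = unit_root k (- (int a * t) + int (vt_moment bs) * int a)"
      by (simp only: unit_root_of_nat_mult unit_root_add)
    then show ?thesis
      by (simp add: algebra_simps)
  qed
  then have "(\<Sum>a<k. unit_root k (- (int a * t)) * (\<Prod>j\<in>{1..s}. 1 - unit_root k (int a) ^ j))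
      = (\<Sum>a<k. \<Sum>bs | length bs = s. (-1) ^ hamming_weight bs * unit_root k (int a * (int (vt_moment bs) - t)))"
    by (simp only: sum_signed_powers_vt_moment[symmetric] sum_distrib_left)
  also have "\<dots> = (\<Sum>bs | length bs = s. (-1) ^ hamming_weight bs * (\<Sum>a<k. unit_root k (int a * (int (vt_moment bs) - t))))"
    by (simp add: sum.swap[of _ "{..<k}"] sum_distrib_left)
  also have "\<dots> = (\<Sum>bs | length bs = s. (-1) ^ hamming_weight bs *
                      (if int (vt_moment bs) mod int k = t mod int k then of_nat k else 0))"
    by (simp add: sum_unit_root[OF assms] mod_eq_dvd_iff)
  also have "\<dots> = of_nat k * of_int (signed_count s k t)"
    by (simp add: signed_count_conv_sum_if of_int_sum sum_distrib_left if_distrib mult.commute cong: if_cong)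
  finally show ?thesis ..
qed

section \<open>Expansion in Ramanujan sums\<close>

lemma prod_one_minus_unit_root_eq_0:
  assumes "0 < k" and "k \<le> 2 * s + 1" and "\<not> coprime a k"
  shows "(\<Prod>j\<in>{1..s}. 1 - unit_root k (int a) ^ j) = 0"
proof -
  define g where "g = gcd a k"
  have "g \<noteq> 1" and "g \<noteq> 0"
    using assms by (auto simp: g_def coprime_iff_gcd_eq_1)
  obtain c where c: "k = g * c"
    using gcd_dvd2 g_def by blast
  obtain a' where a': "a = g * a'"
    using gcd_dvd1 g_def by blast
  have "1 \<le> c"
    using c assms(1) by (cases c) auto
  moreover have "2 * c \<le> k"
    using c \<open>g \<noteq> 0\<close> \<open>g \<noteq> 1\<close> by (simp add: mult_right_mono)
  ultimately have "c \<in> {1..s}"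
    using assms(2) by simp
  moreover have "int c * int a = int k * int a'"
    using a' c by simp
  then have "unit_root k (int a) ^ c = 1"
    by (metis unit_root_of_nat_mult unit_root_multiple)
  ultimately show ?thesis
    by (intro prod_zero) auto
qed

lemma signed_count_eq_sum_ramanujan:
  assumes k: "k = 2 * s + 1" and "4 dvd s * (s + 1)"
  shows "of_nat k * of_int (signed_count s k t)
       = (\<Sum>j<k. ramanujan k (t - int j ^ 2 - int (s * (s + 1) div 4)))"
proof -
  define N where "N = s * (s + 1) div 4"
  define units where "units = {a. a < k \<and> coprime a k}"
  have "0 < k"
    using k by simp
  have gauss: "unit_root k (- (int a * t)) * (\<Prod>j\<in>{1..s}. 1 - unit_root k (int a) ^ j)
      = (\<Sum>x<k. unit_root k (- (int a * (t - int x ^ 2 - int N))))" if "a \<in> units" for a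
  proof -
    define w where "w = unit_root k (int a)"
    have w: "primitive_root (2 * s + 1) w"
      using that \<open>0 < k\<close> k by (simp add: w_def units_def primitive_root_unit_root)
    have "(s + 1) * (s * (s + 1) div 2) = N + (2 * s + 1) * N"
      using assms by (auto simp: N_def elim!: dvdE)
    then have "w ^ ((s + 1) * (s * (s + 1) div 2)) = w ^ N * w ^ ((2 * s + 1) * N)"
      by (simp only: power_add)
    also have "\<dots> = w ^ N"
      by (simp only: power_mult primitive_root_power_order[OF w] power_one mult_1_right)
    finally have "w ^ ((s + 1) * (s * (s + 1) div 2)) = w ^ N" .
    then have "(\<Prod>j\<in>{1..s}. 1 - w ^ j) = (\<Sum>x<k. w ^ (N + x\<^sup>2))"
      by (simp only: prod_one_minus_powers_primitive_root[OF w] k sum_distrib_left power_add)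
    moreover have "unit_root k (- (int a * t)) * w ^ (N + x\<^sup>2) = unit_root k (- (int a * (t - int x ^ 2 - int N)))"
      for x
      by (simp add: w_def unit_root_of_nat_mult[symmetric] unit_root_add[symmetric] algebra_simps)
    ultimately show ?thesis
      by (simp add: w_def sum_distrib_left)
  qed
  have "of_nat k * of_int (signed_count s k t)
      = (\<Sum>a<k. unit_root k (- (int a * t)) * (\<Prod>j\<in>{1..s}. 1 - unit_root k (int a) ^ j))"
    by (rule signed_count_fourier[OF \<open>0 < k\<close>])
  also have "\<dots> = (\<Sum>a\<in>units. unit_root k (- (int a * t)) * (\<Prod>j\<in>{1..s}. 1 - unit_root k (int a) ^ j))"
    using prod_one_minus_unit_root_eq_0[OF \<open>0 < k\<close>] k
    by (intro sum.mono_neutral_right) (auto simp: units_def)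
  also have "\<dots> = (\<Sum>a\<in>units. \<Sum>x<k. unit_root k (- (int a * (t - int x ^ 2 - int N))))"
    using gauss by (rule sum.cong[OF refl])
  also have "\<dots> = (\<Sum>x<k. ramanujan k (t - int x ^ 2 - int N))"
    unfolding ramanujan_eq_sum_conj units_def by (rule sum.swap)
  finally show ?thesis
    by (simp add: N_def)
qed

lemma sigma0_eq_mean_ramanujan:
  assumes "k = 2 * s + 1" and "4 dvd s * (s + 1)"
  shows "of_rat (sigma0 k t (s + 1))
       = (1 / of_nat k) * (\<Sum>j<k. ramanujan k (t - int j ^ 2 - int (s * (s + 1) div 4)))"
proof -
  have "0 < k"
    using assms(1) by simp
  then show ?thesis
    unfolding sigma0_eq_signed_count[OF \<open>0 < k\<close>] of_rat_of_int_eq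
    using signed_count_eq_sum_ramanujan[OF assms, of t] by (simp add: field_simps)
qed

lemma gauss_sum_odd_square:
  assumes "odd m" and "coprime b (int m)"
  shows "(\<Sum>x<m * m. unit_root (m * m) (b * int x ^ 2)) = of_nat m"
proof -
  \<comment> \<open>Write \<open>x = m z + y\<close>: the sum over \<open>z\<close> is a complete character sum modulo \<open>m\<close>,
    which vanishes unless \<open>m\<close> divides \<open>2 y b\<close>, i.e. unless \<open>y = 0\<close>.\<close>
  have "0 < m"
    using assms(1) by (cases m) auto
  have coprime: "coprime (int m) (2 * b)"
    using assms by (simp add: coprime_commute)
  have split: "(\<Sum>x<m * m. f x) = (\<Sum>z<m. \<Sum>y<m. f (m * z + y))" for f :: "nat \<Rightarrow> complex"
  proof -
    have "(\<Sum>x\<in>{z * m..<z * m + m}. f x) = (\<Sum>y<m. f (m * z + y))" for z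
      using sum.shift_bounds_nat_ivl[of f 0 "z * m" m] by (simp add: atLeast0LessThan ac_simps)
    then show ?thesis
      by (simp flip: sum.nat_group[of _ m m])
  qed
  have factor: "unit_root (m * m) (b * int (m * z + y) ^ 2)
      = unit_root (m * m) (b * int y ^ 2) * unit_root m (int z * (2 * int y * b))" for y z
  proof -
    have "b * int (m * z + y) ^ 2
        = b * int y ^ 2 + int m * (int z * (2 * int y * b)) + int (m * m) * (b * int z ^ 2)"
      by (simp add: power2_eq_square algebra_simps)
    then show ?thesis
      by (simp only: unit_root_add unit_root_square_modulus unit_root_multiple mult_1_right)
  qed
  have "(\<Sum>x<m * m. unit_root (m * m) (b * int x ^ 2))
      = (\<Sum>y<m. \<Sum>z<m. unit_root (m * m) (b * int (m * z + y) ^ 2))"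
    unfolding split by (rule sum.swap)
  also have "\<dots> = (\<Sum>y<m. unit_root (m * m) (b * int y ^ 2) * (\<Sum>z<m. unit_root m (int z * (2 * int y * b))))"
    by (simp only: factor sum_distrib_left)
  also have "\<dots> = (\<Sum>y<m. if y = 0 then of_nat m else 0)"
  proof (rule sum.cong[OF refl])
    fix y
    assume "y \<in> {..<m}"
    then have "int m dvd 2 * int y * b \<longleftrightarrow> y = 0"
      using coprime_dvd_mult_left_iff[OF coprime, of "int y"] by (auto simp: mult_ac dest: zdvd_imp_le)
    then show "unit_root (m * m) (b * int y ^ 2) * (\<Sum>z<m. unit_root m (int z * (2 * int y * b)))
        = (if y = 0 then of_nat m else 0)"
      by (simp add: sum_unit_root[OF \<open>0 < m\<close>])
  qed
  also have "\<dots> = of_nat m"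
    using \<open>0 < m\<close> by simp
  finally show ?thesis .
qed

lemma sum_ramanujan_minus_squares:
  assumes "k = m ^ 2" and "odd k"
  shows "(\<Sum>j<k. ramanujan k (x - int j ^ 2)) = complex_of_real (sqrt (real k)) * ramanujan k x"
proof -
  have "k = m * m" and "odd m"
    using assms by (simp_all add: power2_eq_square)
  have "(\<Sum>j<k. ramanujan k (x - int j ^ 2))
      = (\<Sum>h | h \<in> {1..k} \<and> coprime h k. \<Sum>j<k. unit_root k (int h * (x - int j ^ 2)))"
    unfolding ramanujan_eq_sum_unit_root by (rule sum.swap)
  also have "\<dots> = (\<Sum>h | h \<in> {1..k} \<and> coprime h k. unit_root k (int h * x) * of_nat m)"
  proof (rule sum.cong[OF refl])
    fix h
    assume "h \<in> {h. h \<in> {1..k} \<and> coprime h k}"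
    then have "coprime (- int h) (int m)"
      using \<open>k = m * m\<close> by simp
    have "unit_root k (int h * (x - int j ^ 2)) = unit_root k (int h * x) * unit_root k (- int h * int j ^ 2)"
      for j
      by (simp only: unit_root_add[symmetric]) (simp add: algebra_simps)
    then have "(\<Sum>j<k. unit_root k (int h * (x - int j ^ 2)))
        = unit_root k (int h * x) * (\<Sum>j<k. unit_root k (- int h * int j ^ 2))"
      by (simp only: sum_distrib_left)
    also have "\<dots> = unit_root k (int h * x) * of_nat m"
      by (simp only: \<open>k = m * m\<close> gauss_sum_odd_square[OF \<open>odd m\<close> \<open>coprime (- int h) (int m)\<close>])
    finally show "(\<Sum>j<k. unit_root k (int h * (x - int j ^ 2))) = unit_root k (int h * x) * of_nat m" .
  qed
  also have "\<dots> = of_nat m * ramanujan k x"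
    by (simp add: ramanujan_eq_sum_unit_root sum_distrib_left mult.commute)
  also have "of_nat m = complex_of_real (sqrt (real k))"
    using assms(1) by simp
  finally show ?thesis .
qed

theorem theorem3p4:
  fixes s k :: nat and t :: int
  assumes "s > 0"
    and "4 dvd s \<or> 4 dvd (s + 1)"
    and "k = 2 * s + 1"
  shows "complex_of_int (int (card (SVT t 0 s k)) - int (card (SVT t 1 s k)))
           = of_rat (sigma0 k t (s + 1))
       \<and> of_rat (sigma0 k t (s + 1))
           = (1 / of_nat k) * (\<Sum>j\<in>{0..<k}.
                ramanujan k (t - int j ^ 2 - int (s * (s + 1) div 4)))
       \<and> ((\<exists>m::nat. k = m ^ 2) \<longrightarrow>
           complex_of_int (int (card (SVT t 0 s k)) - int (card (SVT t 1 s k)))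
             = of_rat (sigma0 k t (s + 1))
           \<and> of_rat (sigma0 k t (s + 1))
             = (1 / complex_of_real (sqrt (real k))) *
                 ramanujan k (t - int (s * (s + 1) div 4)))"
proof -
  define N where "N = int (s * (s + 1) div 4)"
  have "0 < k" and "odd k"
    using assms(3) by simp_all
  have counts: "complex_of_int (int (card (SVT t 0 s k)) - int (card (SVT t 1 s k)))
      = of_rat (sigma0 k t (s + 1))"
    by (simp only: card_SVT_diff sigma0_eq_signed_count[OF \<open>0 < k\<close>] of_rat_of_int_eq)
  have "4 dvd s * (s + 1)"
    using assms(2) by (meson dvd_mult dvd_mult2)
  then have ramanujan: "of_rat (sigma0 k t (s + 1)) = (1 / of_nat k) * (\<Sum>j\<in>{0..<k}. ramanujan k (t - int j ^ 2 - N))"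
    unfolding N_def atLeast0LessThan by (rule sigma0_eq_mean_ramanujan[OF assms(3)])
  have "of_rat (sigma0 k t (s + 1)) = (1 / complex_of_real (sqrt (real k))) * ramanujan k (t - N)"
    if "k = m ^ 2" for m
  proof -
    define r where "r = complex_of_real (sqrt (real k))"
    have "r \<noteq> 0" and "of_nat k = r * r"
      using \<open>0 < k\<close> by (simp_all add: r_def flip: of_real_mult)
    moreover have "(\<Sum>j\<in>{0..<k}. ramanujan k (t - int j ^ 2 - N)) = r * ramanujan k (t - N)"
      using sum_ramanujan_minus_squares[OF that \<open>odd k\<close>, of "t - N"]
      by (simp add: r_def atLeast0LessThan algebra_simps)
    ultimately show ?thesis
      unfolding ramanujan r_def[symmetric] by simp
  qed
  then show ?thesis
    using counts ramanujan by (auto simp: N_def)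
qed

end
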